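(* Let $\mu$ be a finite Borel measure on $[0,1]$ such that for every $0<s<1$, $$|\widehat{\mu}(0)|^2+\sum_{u\in\mathbb{Z}\setminus\{0\}}|\widehat{\mu}(u)|^2|u|^{s-1}<\infty.$$ Let $U\ge1$ be an integer and $T(\xi)=\sum_{|u|\le U}c_ue(-\xi u)$ with $c_u\in\mathbb{C}$. Then for every $\rho\in(0,1)$, $$\Big|\int_0^1T(\xi)\,d\mu(\xi)\Big|\ll_{\rho,\mu}U^\rho\|T\|_{L^2([0,1])}.$$
   Context: $e(x)=e^{2\pi i x}$ and $\widehat{\mu}(\xi)=\int_0^1e(-\xi\alpha)\,d\mu(\alpha)$. The implied constant depends only on $\rho$ and $\mu$. *)

theory Defs
  imports "HOL-Analysis.Analysis"
begin

definition e :: "real \<Rightarrow> complex" where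
  "e x = cis (2 * pi * x)"

definition fourier_coeff :: "real measure \<Rightarrow> real \<Rightarrow> complex" where
  "fourier_coeff M \<xi> = integral\<^sup>L M (\<lambda>\<alpha>. e (- \<xi> * \<alpha>))"

definition trig_poly :: "nat \<Rightarrow> (int \<Rightarrow> complex) \<Rightarrow> real \<Rightarrow> complex" where
  "trig_poly U c \<xi> = (\<Sum>u\<in>{-int U..int U}. c u * e (- \<xi> * of_int u))"

definition L2_norm01 :: "(real \<Rightarrow> complex) \<Rightarrow> real" where
  "L2_norm01 f = sqrt (LINT \<xi>:{0..1}|lborel. (cmod (f \<xi>))^2)"

end

theory Submission imports Defs begin

text \<open>
  Integrating term by term, the integral of T against \<mu> is the finite sum of c u times the
  Fourier coefficient of \<mu> at u. By Cauchy-Schwarz and Parseval it is therefore bounded by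
  the L2 norm of T times the square root of the sum of the squared Fourier coefficients over
  |u| \<le> U. Since 1 \<le> U powr (1 - s) * |u| powr (s - 1) for 0 < |u| \<le> U, this truncated sum is
  at most U powr (1 - s) times the s-energy of \<mu>. With s = 1 - \<rho> the bound grows like
  U powr (\<rho>/2) \<le> U powr \<rho>.
\<close>

lemma e_add: "e (a + b) = e a * e b"
  unfolding e_def by (simp add: distrib_left cis_mult)

lemma cnj_e: "cnj (e a) = e (- a)"
  unfolding e_def by (simp add: cis_cnj)

lemma e_of_int: "e (of_int k) = 1"
  unfolding e_def by (metis cis_multiple_2pi mult.commute mult.assoc Ints_of_int)

lemma norm_e [simp]: "norm (e a) = 1"
  unfolding e_def by simp

lemma continuous_on_e [continuous_intros]:
  "continuous_on A f \<Longrightarrow> continuous_on A (\<lambda>x. e (f x))"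
  unfolding e_def by (intro continuous_intros)

lemma e_has_vector_derivative:
  "((\<lambda>x. e (x * k)) has_vector_derivative (2 * pi * k * \<i> * e (x * k))) (at x within A)"
proof -
  have "((\<lambda>x. cis (2 * pi * (x * k))) has_derivative
      (\<lambda>t. (2 * pi * (t * k)) *\<^sub>R (\<i> * cis (2 * pi * (x * k))))) (at x within A)"
    by (intro derivative_eq_intros) auto
  then show ?thesis
    unfolding e_def has_vector_derivative_def by (simp add: scaleR_conv_of_real algebra_simps)
qed

lemma e_orthogonal:
  "((\<lambda>x. e (x * of_int k)) has_integral (if k = 0 then 1 else 0)) {0..1::real}"
proof (cases "k = 0")
  case True
  then show ?thesis
    unfolding e_def using has_integral_const_real[of "1::complex" 0 1] by simp
next
  case False
  define F where "F x = e (x * of_int k) / (2 * pi * of_int k * \<i>)" for x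
  have "((\<lambda>x. e (x * of_int k)) has_integral (F 1 - F 0)) {0..1::real}"
  proof (rule fundamental_theorem_of_calculus)
    fix x :: real
    have "(F has_vector_derivative (2 * pi * of_int k * \<i> * e (x * of_int k)) / (2 * pi * of_int k * \<i>))
        (at x within {0..1})"
      unfolding F_def by (intro has_vector_derivative_divide e_has_vector_derivative)
    then show "(F has_vector_derivative e (x * of_int k)) (at x within {0..1})"
      using False by simp
  qed simp
  moreover have "F 1 - F 0 = 0"
    unfolding F_def using e_of_int[of k] e_of_int[of 0] by simp
  ultimately show ?thesis
    using False by simp
qed

lemma continuous_on_trig_poly: "continuous_on A (trig_poly U c)"
  unfolding trig_poly_def by (intro continuous_intros)

lemma norm_sq_trig_poly:
  "complex_of_real ((cmod (trig_poly U c \<xi>))^2) =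
     (\<Sum>u\<in>{-int U..int U}. \<Sum>v\<in>{-int U..int U}. c u * cnj (c v) * e (\<xi> * of_int (v - u)))"
proof -
  let ?A = "{-int U..int U}"
  have "complex_of_real ((cmod (trig_poly U c \<xi>))^2) = trig_poly U c \<xi> * cnj (trig_poly U c \<xi>)"
    by (rule complex_norm_square)
  also have "\<dots> = (\<Sum>u\<in>?A. c u * e (- \<xi> * of_int u)) * (\<Sum>v\<in>?A. cnj (c v) * e (\<xi> * of_int v))"
    unfolding trig_poly_def by (simp add: cnj_e)
  also have "\<dots> = (\<Sum>u\<in>?A. \<Sum>v\<in>?A. c u * e (- \<xi> * of_int u) * (cnj (c v) * e (\<xi> * of_int v)))"
    by (rule sum_product)
  also have "\<dots> = (\<Sum>u\<in>?A. \<Sum>v\<in>?A. c u * cnj (c v) * e (\<xi> * of_int (v - u)))"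
    by (simp add: right_diff_distrib e_add[symmetric] mult_ac)
  finally show ?thesis .
qed

lemma norm_sq_trig_poly_has_integral:
  "((\<lambda>\<xi>. (cmod (trig_poly U c \<xi>))^2) has_integral (\<Sum>u\<in>{-int U..int U}. (cmod (c u))^2)) {0..1}"
proof -
  let ?A = "{-int U..int U}"
  have "((\<lambda>\<xi>. \<Sum>u\<in>?A. \<Sum>v\<in>?A. c u * cnj (c v) * e (\<xi> * of_int (v - u))) has_integral
      (\<Sum>u\<in>?A. \<Sum>v\<in>?A. c u * cnj (c v) * (if v - u = 0 then 1 else 0))) {0..1}"
    by (intro has_integral_sum finite_atLeastAtMost_int has_integral_mult_right e_orthogonal)
  also have "(\<Sum>u\<in>?A. \<Sum>v\<in>?A. c u * cnj (c v) * (if v - u = 0 then 1 else 0)) =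
      (\<Sum>u\<in>?A. c u * cnj (c u))"
    by (intro sum.cong refl) (simp add: if_distrib sum.delta cong: if_cong)
  also have "\<dots> = complex_of_real (\<Sum>u\<in>?A. (cmod (c u))^2)"
    by (simp only: of_real_sum complex_norm_square)
  finally show ?thesis
    unfolding norm_sq_trig_poly[symmetric] by (auto dest: has_integral_Re)
qed

lemma L2_norm01_trig_poly: "L2_norm01 (trig_poly U c) = L2_set (\<lambda>u. cmod (c u)) {-int U..int U}"
proof -
  have "set_integrable lborel {0..1} (\<lambda>\<xi>. (cmod (trig_poly U c \<xi>))^2)"
    by (intro borel_integrable_atLeastAtMost' continuous_intros continuous_on_trig_poly)
  then show ?thesis
    unfolding L2_norm01_def L2_set_def
    using norm_sq_trig_poly_has_integral set_borel_integral_eq_integral(2)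
    by (metis integral_unique)
qed

lemma integral_trig_poly:
  assumes "sets M = sets borel" and "finite_measure M"
  shows "integral\<^sup>L M (trig_poly U c) = (\<Sum>u\<in>{-int U..int U}. c u * fourier_coeff M (of_int u))"
proof -
  have "(\<lambda>\<xi>. c u * e (- \<xi> * of_int u)) \<in> borel_measurable M" for u
    unfolding measurable_cong_sets[OF assms(1) refl]
    by (intro borel_measurable_continuous_onI continuous_intros)
  then have "integrable M (\<lambda>\<xi>. c u * e (- \<xi> * of_int u))" for u
    by (intro finite_measure.integrable_const_bound[OF assms(2), where B = "cmod (c u)"])
       (auto simp: norm_mult)
  then show ?thesis
    unfolding trig_poly_def fourier_coeff_def by (simp add: Bochner_Integration.integral_sum mult_ac)
qed

definition fourier_energy :: "real measure \<Rightarrow> real \<Rightarrow> real" where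
  "fourier_energy M s = (cmod (fourier_coeff M 0))^2 +
     (\<Sum>\<^sub>\<infinity>u\<in>UNIV - {0}. (cmod (fourier_coeff M (of_int u)))^2 * \<bar>real_of_int u\<bar> powr (s - 1))"

lemma fourier_energy_nonneg: "0 \<le> fourier_energy M s"
  unfolding fourier_energy_def by (intro add_nonneg_nonneg infsum_nonneg) auto

lemma one_le_powr_mult_powr:
  fixes x X s :: real
  assumes "0 < x" and "x \<le> X" and "s \<le> 1"
  shows "1 \<le> X powr (1 - s) * x powr (s - 1)"
proof -
  have "1 = x powr (1 - s) * x powr (s - 1)"
    using assms(1) by (simp add: powr_add[symmetric])
  also have "\<dots> \<le> X powr (1 - s) * x powr (s - 1)"
    using assms by (intro mult_right_mono powr_mono2) auto
  finally show ?thesis .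
qed

lemma sum_le_powr_mult_weighted_infsum:
  fixes a :: "int \<Rightarrow> real"
  assumes nonneg: "\<And>u. 0 \<le> a u" and "s \<le> 1" and "1 \<le> U"
    and summable: "(\<lambda>u. a u * \<bar>real_of_int u\<bar> powr (s - 1)) summable_on (UNIV - {0})"
  shows "(\<Sum>u\<in>{-int U..int U}. a u) \<le>
    real U powr (1 - s) * (a 0 + (\<Sum>\<^sub>\<infinity>u\<in>UNIV - {0}. a u * \<bar>real_of_int u\<bar> powr (s - 1)))"
proof -
  let ?A = "{-int U..int U}" and ?w = "\<lambda>u. a u * \<bar>real_of_int u\<bar> powr (s - 1)"
  have U_powr: "1 \<le> real U powr (1 - s)"
    using assms by (intro ge_one_powr_ge_zero) auto
  have weight: "a u \<le> real U powr (1 - s) * ?w u" if "u \<in> ?A - {0}" for u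
  proof -
    have "1 \<le> real U powr (1 - s) * \<bar>real_of_int u\<bar> powr (s - 1)"
      using that \<open>s \<le> 1\<close> by (intro one_le_powr_mult_powr) auto
    from mult_left_mono[OF this nonneg] show ?thesis
      by (simp add: mult_ac)
  qed
  have "(\<Sum>u\<in>?A - {0}. a u) \<le> real U powr (1 - s) * (\<Sum>u\<in>?A - {0}. ?w u)"
    unfolding sum_distrib_left by (rule sum_mono) (rule weight)
  also have "(\<Sum>u\<in>?A - {0}. ?w u) \<le> (\<Sum>\<^sub>\<infinity>u\<in>UNIV - {0}. ?w u)"
    using summable nonneg infsum_mono_neutral[of ?w "?A - {0}" ?w "UNIV - {0}"] by simp
  finally have "(\<Sum>u\<in>?A - {0}. a u) \<le> real U powr (1 - s) * (\<Sum>\<^sub>\<infinity>u\<in>UNIV - {0}. ?w u)"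
    using U_powr by (simp add: mult_left_mono)
  moreover have "a 0 \<le> real U powr (1 - s) * a 0"
    using U_powr nonneg[of 0] by (simp add: mult_le_cancel_right1)
  moreover have "(\<Sum>u\<in>?A. a u) = a 0 + (\<Sum>u\<in>?A - {0}. a u)"
    by (subst sum.remove[of _ 0]) auto
  ultimately show ?thesis
    by (simp add: distrib_left)
qed

lemma norm_integral_trig_poly_le:
  assumes "sets M = sets borel" and "finite_measure M" and "s \<le> 1" and "1 \<le> U"
    and summable: "(\<lambda>u::int. (cmod (fourier_coeff M (of_int u)))^2 * \<bar>real_of_int u\<bar> powr (s - 1))
      summable_on (UNIV - {0})"
  shows "cmod (integral\<^sup>L M (trig_poly U c)) \<le>
    sqrt (fourier_energy M s) * real U powr ((1 - s) / 2) * L2_norm01 (trig_poly U c)"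
proof -
  let ?A = "{-int U..int U}" and ?m = "\<lambda>u. cmod (fourier_coeff M (of_int u))"
  have "L2_set ?m ?A \<le> sqrt (real U powr (1 - s) * fourier_energy M s)"
    unfolding L2_set_def fourier_energy_def
    using sum_le_powr_mult_weighted_infsum[OF _ \<open>s \<le> 1\<close> \<open>1 \<le> U\<close> summable] by simp
  also have "\<dots> = sqrt (fourier_energy M s) * real U powr ((1 - s) / 2)"
    by (simp add: real_sqrt_mult powr_half_sqrt_powr)
  finally have L2_coeff: "L2_set ?m ?A \<le> sqrt (fourier_energy M s) * real U powr ((1 - s) / 2)" .
  have "cmod (integral\<^sup>L M (trig_poly U c)) = cmod (\<Sum>u\<in>?A. c u * fourier_coeff M (of_int u))"
    using integral_trig_poly[OF assms(1,2)] by simp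
  also have "\<dots> \<le> (\<Sum>u\<in>?A. \<bar>cmod (c u)\<bar> * \<bar>?m u\<bar>)"
    by (rule order_trans[OF norm_sum]) (simp add: norm_mult)
  also have "\<dots> \<le> L2_set (\<lambda>u. cmod (c u)) ?A * L2_set ?m ?A"
    by (rule L2_set_mult_ineq)
  also have "\<dots> \<le> L2_norm01 (trig_poly U c) * (sqrt (fourier_energy M s) * real U powr ((1 - s) / 2))"
    unfolding L2_norm01_trig_poly by (intro mult_left_mono L2_coeff L2_set_nonneg)
  finally show ?thesis
    by (simp add: mult_ac)
qed

theorem lemma4p1:
  fixes M :: "real measure"
  assumes borel: "sets M = sets borel"
    and fin: "finite_measure M"
    and supp: "emeasure M (- {0..1}) = 0"
    and energy: "\<And>s::real. 0 < s \<Longrightarrow> s < 1 \<Longrightarrow>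
        (\<lambda>u::int. (cmod (fourier_coeff M (of_int u)))^2 * \<bar>real_of_int u\<bar> powr (s - 1))
          summable_on (UNIV - {0})"
  shows "\<forall>\<rho>::real. 0 < \<rho> \<and> \<rho> < 1 \<longrightarrow>
    (\<exists>C::real. \<forall>(U::nat) (c::int \<Rightarrow> complex). U \<ge> 1 \<longrightarrow>
       cmod (integral\<^sup>L M (trig_poly U c)) \<le> C * real U powr \<rho> * L2_norm01 (trig_poly U c))"
proof (intro allI impI)
  fix \<rho> :: real
  assume \<rho>: "0 < \<rho> \<and> \<rho> < 1"
  let ?C = "sqrt (fourier_energy M (1 - \<rho>))"
  have "cmod (integral\<^sup>L M (trig_poly U c)) \<le> ?C * real U powr \<rho> * L2_norm01 (trig_poly U c)"
    if "U \<ge> 1" for U c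
  proof -
    have "cmod (integral\<^sup>L M (trig_poly U c)) \<le> ?C * real U powr (\<rho> / 2) * L2_norm01 (trig_poly U c)"
      using norm_integral_trig_poly_le[OF borel fin _ that energy[of "1 - \<rho>"]] \<rho> by simp
    also have "\<dots> \<le> ?C * real U powr \<rho> * L2_norm01 (trig_poly U c)"
      using that \<rho> unfolding L2_norm01_trig_poly
      by (intro mult_right_mono mult_left_mono powr_mono L2_set_nonneg) (auto simp: fourier_energy_nonneg)
    finally show ?thesis .
  qed
  then show "\<exists>C. \<forall>U c. U \<ge> 1 \<longrightarrow>
      cmod (integral\<^sup>L M (trig_poly U c)) \<le> C * real U powr \<rho> * L2_norm01 (trig_poly U c)"
    by blast
qed

end
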